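(* Let $(\rho,u,E,F_1,F_2)$ be an optimal quintuple on $[0,T]$ for the full Euler control problem. Assume that for every $a\in[0,T)$ there exists an admissible quintuple $(\tilde\rho,\tilde u,\tilde E,\tilde F_1,\tilde F_2)$ on $[a,T]$ with $(\tilde\rho,\tilde u,\tilde E)(a)=(\rho,u,E)(a)$ and feedback controls $\tilde F_1=-\lambda^{-1/2}(\tilde u-\bar v)$, $\tilde F_2=-\lambda^{-1/2}\big(2\tilde e+\tilde u\cdot(\tilde u-\bar v)\big)$, $\tilde e=\tilde E-\frac12|\tilde u|^2$. Then for every $a\in[0,T]$, $$\int_a^T\int_{\mathbb R^D}\rho|u-\bar v|^2+2\rho e+\lambda G(F_1,F_2)\,dx\,dt\le\sqrt\lambda\int_{\mathbb R^D}\rho(a,x)|u(a,x)-\bar v|^2+2\rho(a,x)e(a,x)\,dx.$$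
   Context: Fix $D\ge1$, $T>0$, $\lambda>0$, $\bar v\in\mathbb R^D$, and an interaction kernel $\Psi:\mathbb R^D\times\mathbb R^D\to\mathbb R$ which is Lipschitz continuous, symmetric ($\Psi(x,y)=\Psi(y,x)$), nonnegative and bounded. For $0\le a<T$, an admissible quintuple on $[a,T]$ for the controlled full Euler system is $(\rho,u,E,F_1,F_2)$ with $\rho\in C^1([a,T]\times\mathbb R^D;[0,\infty))$, $u\in C^1([a,T]\times\mathbb R^D;\mathbb R^D)$, $E\in C^1([a,T]\times\mathbb R^D;\mathbb R)$, $F_1\in C([a,T]\times\mathbb R^D;\mathbb R^D)$, $F_2\in C([a,T]\times\mathbb R^D;\mathbb R)$, such that the internal energy $e:=E-\frac12|u|^2$ satisfies $e>0$ everywhere, there is a compact set $K\subset\mathbb R^D$ with $\operatorname{supp}\rho(t,\cdot)\subset K$ for all $t$, and, with pressure $p:=\frac{2}{D}\rho e$, the system $\partial_t\rho+\nabla_x\cdot(\rho u)=0$, $\partial_t(\rho u)+\nabla_x\cdot(\rho u\otimes u+pI)=Q_1+\rho F_1$, $\partial_t(\rho E)+\nabla_x\cdot(\rho Eu+pu)=Q_2+\rho F_2$ holds classically, where $Q_1(t,x)=\int\Psi(x,y)\rho(t,x)\rho(t,y)\big(u(t,y)-u(t,x)\big)dy$ and $Q_2(t,x)=\int\Psi(x,y)\rho(t,x)\rho(t,y)\big(u(t,x)\cdot u(t,y)-E(t,x)-E(t,y)\big)dy$. Define $G(F_1,F_2)=\rho|F_1|^2+\frac{\rho}{2e}|F_2-u\cdot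 F_1|^2$ and the cost on $[a,T]$, $J^{[a,T]}_{H_2}=\int_a^T\int_{\mathbb R^D}\rho|u-\bar v|^2+2\rho e+\lambda G(F_1,F_2)\,dx\,dt$. An admissible quintuple on $[0,T]$ is optimal if for every $a\in[0,T)$ its restriction to $[a,T]$ minimizes $J^{[a,T]}_{H_2}$ among all admissible quintuples on $[a,T]$ with the same values of $(\rho,u,E)$ at time $a$. *)

theory Defs
  imports "HOL-Analysis.Analysis"
begin

text \<open>Space: real ^ 'n with D = CARD('n). Fields are functions of time t :: real and
  position x :: real ^ 'n.\<close>

definition C1_on :: "(real \<times> (real ^ 'n)) set \<Rightarrow> (real \<times> (real ^ 'n) \<Rightarrow> 'b::real_normed_vector) \<Rightarrow> bool" where
  "C1_on S f \<longleftrightarrow> (\<exists>f'. (\<forall>z\<in>S. (f has_derivative blinfun_apply (f' z)) (at z within S))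
                       \<and> continuous_on S f')"

definition pt :: "real set \<Rightarrow> (real \<Rightarrow> real ^ 'n \<Rightarrow> 'b::real_normed_vector) \<Rightarrow> real \<Rightarrow> real ^ 'n \<Rightarrow> 'b" where
  "pt I f t x = vector_derivative (\<lambda>s. f s x) (at t within I)"

definition px :: "'n \<Rightarrow> (real \<Rightarrow> real ^ 'n \<Rightarrow> 'b::real_normed_vector) \<Rightarrow> real \<Rightarrow> real ^ 'n \<Rightarrow> 'b" where
  "px i f t x = vector_derivative (\<lambda>h. f t (x + h *\<^sub>R axis i 1)) (at 0)"

definition ien :: "(real \<Rightarrow> real ^ 'n \<Rightarrow> real ^ 'n) \<Rightarrow> (real \<Rightarrow> real ^ 'n \<Rightarrow> real) \<Rightarrow> real \<Rightarrow> real ^ 'n \<Rightarrow> real" where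
  "ien u E t x = E t x - (norm (u t x))\<^sup>2 / 2"

definition press :: "(real \<Rightarrow> real ^ 'n \<Rightarrow> real) \<Rightarrow> (real \<Rightarrow> real ^ 'n \<Rightarrow> real ^ 'n) \<Rightarrow> (real \<Rightarrow> real ^ 'n \<Rightarrow> real) \<Rightarrow> real \<Rightarrow> real ^ 'n \<Rightarrow> real" where
  "press \<rho> u E t x = (2 / real CARD('n)) * \<rho> t x * ien u E t x"

definition Q1 :: "(real ^ 'n \<Rightarrow> real ^ 'n \<Rightarrow> real) \<Rightarrow> (real \<Rightarrow> real ^ 'n \<Rightarrow> real) \<Rightarrow> (real \<Rightarrow> real ^ 'n \<Rightarrow> real ^ 'n) \<Rightarrow> real \<Rightarrow> real ^ 'n \<Rightarrow> real ^ 'n" where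
  "Q1 \<Psi> \<rho> u t x = integral UNIV (\<lambda>y. (\<Psi> x y * \<rho> t x * \<rho> t y) *\<^sub>R (u t y - u t x))"

definition Q2 :: "(real ^ 'n \<Rightarrow> real ^ 'n \<Rightarrow> real) \<Rightarrow> (real \<Rightarrow> real ^ 'n \<Rightarrow> real) \<Rightarrow> (real \<Rightarrow> real ^ 'n \<Rightarrow> real ^ 'n) \<Rightarrow> (real \<Rightarrow> real ^ 'n \<Rightarrow> real) \<Rightarrow> real \<Rightarrow> real ^ 'n \<Rightarrow> real" where
  "Q2 \<Psi> \<rho> u E t x = integral UNIV (\<lambda>y. \<Psi> x y * \<rho> t x * \<rho> t y * (inner (u t x) (u t y) - E t x - E t y))"

definition admissible :: "(real ^ 'n \<Rightarrow> real ^ 'n \<Rightarrow> real) \<Rightarrow> real \<Rightarrow> real \<Rightarrow>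
    (real \<Rightarrow> real ^ 'n \<Rightarrow> real) \<Rightarrow> (real \<Rightarrow> real ^ 'n \<Rightarrow> real ^ 'n) \<Rightarrow> (real \<Rightarrow> real ^ 'n \<Rightarrow> real) \<Rightarrow>
    (real \<Rightarrow> real ^ 'n \<Rightarrow> real ^ 'n) \<Rightarrow> (real \<Rightarrow> real ^ 'n \<Rightarrow> real) \<Rightarrow> bool" where
  "admissible \<Psi> a T \<rho> u E F1 F2 \<longleftrightarrow>
     (let S = {a..T} \<times> (UNIV :: (real ^ 'n) set); I = {a..T}; p = press \<rho> u E in
      C1_on S (\<lambda>(t,x). \<rho> t x) \<and> C1_on S (\<lambda>(t,x). u t x) \<and> C1_on S (\<lambda>(t,x). E t x) \<and>
      continuous_on S (\<lambda>(t,x). F1 t x) \<and> continuous_on S (\<lambda>(t,x). F2 t x) \<and>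
      (\<forall>t\<in>I. \<forall>x. \<rho> t x \<ge> 0) \<and>
      (\<forall>t\<in>I. \<forall>x. ien u E t x > 0) \<and>
      (\<exists>K. compact K \<and> (\<forall>t\<in>I. closure {x. \<rho> t x \<noteq> 0} \<subseteq> K)) \<and>
      (\<forall>t\<in>I. \<forall>x.
         pt I \<rho> t x + (\<Sum>i\<in>UNIV. px i (\<lambda>t x. \<rho> t x * u t x $ i) t x) = 0) \<and>
      (\<forall>t\<in>I. \<forall>x.
         pt I (\<lambda>t x. \<rho> t x *\<^sub>R u t x) t x
         + (\<chi> j. \<Sum>i\<in>UNIV. px i (\<lambda>t x. \<rho> t x * u t x $ j * u t x $ i + (if i = j then p t x else 0)) t x)
         = Q1 \<Psi> \<rho> u t x + \<rho> t x *\<^sub>R F1 t x) \<and>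
      (\<forall>t\<in>I. \<forall>x.
         pt I (\<lambda>t x. \<rho> t x * E t x) t x
         + (\<Sum>i\<in>UNIV. px i (\<lambda>t x. \<rho> t x * E t x * u t x $ i + p t x * u t x $ i) t x)
         = Q2 \<Psi> \<rho> u E t x + \<rho> t x * F2 t x))"

definition Gc :: "(real \<Rightarrow> real ^ 'n \<Rightarrow> real) \<Rightarrow> (real \<Rightarrow> real ^ 'n \<Rightarrow> real ^ 'n) \<Rightarrow> (real \<Rightarrow> real ^ 'n \<Rightarrow> real) \<Rightarrow>
    (real \<Rightarrow> real ^ 'n \<Rightarrow> real ^ 'n) \<Rightarrow> (real \<Rightarrow> real ^ 'n \<Rightarrow> real) \<Rightarrow> real \<Rightarrow> real ^ 'n \<Rightarrow> real" where
  "Gc \<rho> u E F1 F2 t x = \<rho> t x * (norm (F1 t x))\<^sup>2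
      + \<rho> t x / (2 * ien u E t x) * \<bar>F2 t x - inner (u t x) (F1 t x)\<bar>\<^sup>2"

definition cost :: "real \<Rightarrow> real ^ 'n \<Rightarrow> real \<Rightarrow> real \<Rightarrow>
    (real \<Rightarrow> real ^ 'n \<Rightarrow> real) \<Rightarrow> (real \<Rightarrow> real ^ 'n \<Rightarrow> real ^ 'n) \<Rightarrow> (real \<Rightarrow> real ^ 'n \<Rightarrow> real) \<Rightarrow>
    (real \<Rightarrow> real ^ 'n \<Rightarrow> real ^ 'n) \<Rightarrow> (real \<Rightarrow> real ^ 'n \<Rightarrow> real) \<Rightarrow> real" where
  "cost lam vbar a T \<rho> u E F1 F2 =
     integral {a..T} (\<lambda>t. integral UNIV (\<lambda>x.
        \<rho> t x * (norm (u t x - vbar))\<^sup>2 + 2 * \<rho> t x * ien u E t x + lam * Gc \<rho> u E F1 F2 t x))"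

definition optimal :: "(real ^ 'n \<Rightarrow> real ^ 'n \<Rightarrow> real) \<Rightarrow> real \<Rightarrow> real ^ 'n \<Rightarrow> real \<Rightarrow>
    (real \<Rightarrow> real ^ 'n \<Rightarrow> real) \<Rightarrow> (real \<Rightarrow> real ^ 'n \<Rightarrow> real ^ 'n) \<Rightarrow> (real \<Rightarrow> real ^ 'n \<Rightarrow> real) \<Rightarrow>
    (real \<Rightarrow> real ^ 'n \<Rightarrow> real ^ 'n) \<Rightarrow> (real \<Rightarrow> real ^ 'n \<Rightarrow> real) \<Rightarrow> bool" where
  "optimal \<Psi> lam vbar T \<rho> u E F1 F2 \<longleftrightarrow>
     admissible \<Psi> 0 T \<rho> u E F1 F2 \<and>
     (\<forall>a\<in>{0..<T}. admissible \<Psi> a T \<rho> u E F1 F2 \<and>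
        (\<forall>\<rho>' u' E' F1' F2'. admissible \<Psi> a T \<rho>' u' E' F1' F2' \<and>
            (\<forall>x. \<rho>' a x = \<rho> a x \<and> u' a x = u a x \<and> E' a x = E a x) \<longrightarrow>
            cost lam vbar a T \<rho> u E F1 F2 \<le> cost lam vbar a T \<rho>' u' E' F1' F2'))"

end

(* Along the feedback controls the work of the control forces is
   rho (F2 - F1 . vbar) = - lam^(-1/2) h  with  h = rho |u - vbar|^2 + 2 rho e,
   and lam G(F1, F2) = h, so the running cost is 2 h.  Integrating the balance laws in space,
   the flux terms drop out (they are divergences of compactly supported fields), the alignment
   force Q1 integrates to 0 (its kernel is antisymmetric) and Q2 <= 0, because
   u(x).u(y) - E(x) - E(y) = - |u(x) - u(y)|^2 / 2 - e(x) - e(y).  Hence H(t) = int h(t, x) dx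
   obeys H' <= 2 int rho (F2 - F1 . vbar) = - (2 / sqrt lam) H, which integrates to
   2 int_a^T H <= sqrt lam H(a).  Optimality bounds the cost of the optimal quintuple by the cost
   2 int_a^T H of the feedback one. *)
theory Submission
  imports Defs
begin

section \<open>\<open>C\<^sup>1\<close> fields\<close>

lemma C1_onI:
  assumes "\<And>z. z \<in> S \<Longrightarrow> (f has_derivative blinfun_apply (f' z)) (at z within S)"
    and "continuous_on S f'"
  shows "C1_on S f"
  using assms unfolding C1_on_def by blast

lemma C1_on_imp_continuous_on: "C1_on S f \<Longrightarrow> continuous_on S f"
  unfolding C1_on_def
  by (meson continuous_on_eq_continuous_within has_derivative_continuous)

lemma C1_on_const: "C1_on S (\<lambda>z. c)"
  by (rule C1_onI[of _ _ "\<lambda>z. 0"]) (auto intro!: derivative_eq_intros)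

lemma C1_on_add:
  assumes "C1_on S f" and "C1_on S g"
  shows "C1_on S (\<lambda>z. f z + g z)"
proof -
  obtain f' g' where f': "\<forall>z\<in>S. (f has_derivative blinfun_apply (f' z)) (at z within S)"
    and g': "\<forall>z\<in>S. (g has_derivative blinfun_apply (g' z)) (at z within S)"
    and "continuous_on S f'" "continuous_on S g'"
    using assms unfolding C1_on_def by blast
  show ?thesis
  proof (rule C1_onI)
    show "((\<lambda>z. f z + g z) has_derivative blinfun_apply (f' z + g' z)) (at z within S)"
      if "z \<in> S" for z
      using has_derivative_add[OF f'[rule_format, OF that] g'[rule_format, OF that]]
      by (simp add: plus_blinfun.rep_eq)
    show "continuous_on S (\<lambda>z. f' z + g' z)"
      using \<open>continuous_on S f'\<close> \<open>continuous_on S g'\<close> by (rule continuous_on_add)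
  qed
qed

lemma C1_on_linear:
  assumes L: "bounded_linear L" and "C1_on S f"
  shows "C1_on S (\<lambda>z. L (f z))"
proof -
  obtain f' where f': "\<forall>z\<in>S. (f has_derivative blinfun_apply (f' z)) (at z within S)"
    and "continuous_on S f'"
    using assms unfolding C1_on_def by blast
  show ?thesis
  proof (rule C1_onI)
    show "((\<lambda>z. L (f z)) has_derivative blinfun_apply (Blinfun L o\<^sub>L f' z)) (at z within S)"
      if "z \<in> S" for z
      using bounded_linear.has_derivative[OF L f'[rule_format, OF that]]
      by (rule has_derivative_eq_rhs) (simp add: fun_eq_iff bounded_linear_Blinfun_apply[OF L])
    show "continuous_on S (\<lambda>z. Blinfun L o\<^sub>L f' z)"
      using \<open>continuous_on S f'\<close> by (auto intro!: continuous_intros)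
  qed
qed

lemma C1_on_diff:
  assumes "C1_on S f" and "C1_on S g"
  shows "C1_on S (\<lambda>z. f z - g z)"
  using C1_on_add[OF assms(1) C1_on_linear[OF bounded_linear_minus[OF bounded_linear_ident] assms(2)]]
  by simp

lemma C1_on_scaleR:
  assumes "C1_on S f" and "C1_on S g"
  shows "C1_on S (\<lambda>z. f z *\<^sub>R g z)"
proof -
  obtain f' g' where f': "\<forall>z\<in>S. (f has_derivative blinfun_apply (f' z)) (at z within S)"
    and g': "\<forall>z\<in>S. (g has_derivative blinfun_apply (g' z)) (at z within S)"
    and "continuous_on S f'" "continuous_on S g'"
    using assms unfolding C1_on_def by blast
  have "continuous_on S f" "continuous_on S g"
    using assms by (simp_all add: C1_on_imp_continuous_on)
  show ?thesis
  proof (rule C1_onI)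
    show "((\<lambda>z. f z *\<^sub>R g z) has_derivative
        blinfun_apply (f z *\<^sub>R g' z + (blinfun_scaleR_left (g z) o\<^sub>L f' z))) (at z within S)"
      if "z \<in> S" for z
      using has_derivative_scaleR[OF f'[rule_format, OF that] g'[rule_format, OF that]]
      by (rule has_derivative_eq_rhs) (simp add: fun_eq_iff blinfun.bilinear_simps)
    show "continuous_on S (\<lambda>z. f z *\<^sub>R g' z + (blinfun_scaleR_left (g z) o\<^sub>L f' z))"
      using \<open>continuous_on S f\<close> \<open>continuous_on S g\<close> \<open>continuous_on S f'\<close> \<open>continuous_on S g'\<close>
      by (auto intro!: continuous_intros)
  qed
qed

lemma C1_on_mult: "C1_on S f \<Longrightarrow> C1_on S g \<Longrightarrow> C1_on S (\<lambda>z. f z * (g z :: real))"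
  using C1_on_scaleR[of S f g] by simp

lemma C1_on_inner:
  fixes f g :: "real \<times> (real ^ 'n) \<Rightarrow> 'b::real_inner"
  assumes "C1_on S f" and "C1_on S g"
  shows "C1_on S (\<lambda>z. inner (f z) (g z))"
proof -
  obtain f' g' where f': "\<forall>z\<in>S. (f has_derivative blinfun_apply (f' z)) (at z within S)"
    and g': "\<forall>z\<in>S. (g has_derivative blinfun_apply (g' z)) (at z within S)"
    and "continuous_on S f'" "continuous_on S g'"
    using assms unfolding C1_on_def by blast
  have "continuous_on S f" "continuous_on S g"
    using assms by (simp_all add: C1_on_imp_continuous_on)
  show ?thesis
  proof (rule C1_onI)
    show "((\<lambda>z. inner (f z) (g z)) has_derivative
        blinfun_apply ((blinfun_inner_right (f z) o\<^sub>L g' z) + (blinfun_inner_left (g z) o\<^sub>L f' z)))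
        (at z within S)" if "z \<in> S" for z
      using has_derivative_inner[OF f'[rule_format, OF that] g'[rule_format, OF that]]
      by (rule has_derivative_eq_rhs) (simp add: fun_eq_iff blinfun.bilinear_simps inner_commute)
    show "continuous_on S
        (\<lambda>z. (blinfun_inner_right (f z) o\<^sub>L g' z) + (blinfun_inner_left (g z) o\<^sub>L f' z))"
      using \<open>continuous_on S f\<close> \<open>continuous_on S g\<close> \<open>continuous_on S f'\<close> \<open>continuous_on S g'\<close>
      by (auto intro!: continuous_intros)
  qed
qed

lemma C1_on_component: "C1_on S f \<Longrightarrow> C1_on S (\<lambda>z. f z $ i)"
  using C1_on_linear[OF bounded_linear_vec_nth] .

lemma continuous_on_slice:
  assumes "continuous_on (A \<times> B) (\<lambda>(s, x). f s x)" and "s \<in> A"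
  shows "continuous_on B (f s)"
  using continuous_on_compose_Pair[OF assms(1), of B "\<lambda>x. s" "\<lambda>x. x"] assms(2)
  by (auto intro: continuous_intros)

lemma has_vector_derivative_field_time:
  fixes f :: "real \<Rightarrow> real ^ 'n \<Rightarrow> 'b::real_normed_vector"
  assumes f': "\<forall>z\<in>{a..T} \<times> UNIV.
      ((\<lambda>(t, x). f t x) has_derivative blinfun_apply (f' z)) (at z within {a..T} \<times> UNIV)"
    and t: "t \<in> {a..T}"
  shows "((\<lambda>s. f s x) has_vector_derivative f' (t, x) (1, 0)) (at t within {a..T})"
proof -
  have "((\<lambda>s. f s x) has_derivative (\<lambda>h. f' (t, x) (h, 0))) (at t within {a..T})"
    by (rule has_derivative_in_compose2[OF f'[rule_format], of "\<lambda>s. (s, x)" "{a..T}" t "\<lambda>h. (h, 0)",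
          simplified])
      (use t in \<open>auto intro!: derivative_eq_intros\<close>)
  then show ?thesis
    unfolding has_vector_derivative_def
    by (rule has_derivative_eq_rhs) (simp add: fun_eq_iff blinfun.scaleR_right[symmetric])
qed

lemma has_vector_derivative_field_space:
  fixes f :: "real \<Rightarrow> real ^ 'n \<Rightarrow> 'b::real_normed_vector"
  assumes f': "\<forall>z\<in>{a..T} \<times> UNIV.
      ((\<lambda>(t, x). f t x) has_derivative blinfun_apply (f' z)) (at z within {a..T} \<times> UNIV)"
    and t: "t \<in> {a..T}" and s: "s \<in> U"
  shows "((\<lambda>h. f t (x + h *\<^sub>R e)) has_vector_derivative f' (t, x + s *\<^sub>R e) (0, e)) (at s within U)"
proof -
  have "((\<lambda>h. f t (x + h *\<^sub>R e)) has_derivative (\<lambda>h. f' (t, x + s *\<^sub>R e) (0, h *\<^sub>R e))) (at s within U)"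
    by (rule has_derivative_in_compose2[OF f'[rule_format], of "\<lambda>h. (t, x + h *\<^sub>R e)" U s
          "\<lambda>h. (0, h *\<^sub>R e)", simplified])
      (use t s in \<open>auto intro!: derivative_eq_intros\<close>)
  then show ?thesis
    unfolding has_vector_derivative_def
    by (rule has_derivative_eq_rhs) (simp add: fun_eq_iff blinfun.scaleR_right[symmetric])
qed

lemma has_vector_derivative_pt:
  assumes "C1_on ({a..T} \<times> UNIV) (\<lambda>(t, x). f t x)" and "t \<in> {a..T}"
  shows "((\<lambda>s. f s x) has_vector_derivative pt {a..T} f t x) (at t within {a..T})"
proof -
  obtain f' where "\<forall>z\<in>{a..T} \<times> UNIV.
      ((\<lambda>(t, x). f t x) has_derivative blinfun_apply (f' z)) (at z within {a..T} \<times> UNIV)"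
    using assms(1) unfolding C1_on_def by blast
  then have "(\<lambda>s. f s x) differentiable (at t within {a..T})"
    using has_vector_derivative_field_time assms(2) unfolding differentiable_def has_vector_derivative_def
    by blast
  then show ?thesis
    unfolding pt_def by (rule vector_derivative_works[THEN iffD1])
qed

lemma continuous_on_pt:
  assumes "C1_on ({a..T} \<times> UNIV) (\<lambda>(t, x). f t x)" and "a < T"
  shows "continuous_on ({a..T} \<times> UNIV) (\<lambda>(t, x). pt {a..T} f t x)"
proof -
  obtain f' where f': "\<forall>z\<in>{a..T} \<times> UNIV.
      ((\<lambda>(t, x). f t x) has_derivative blinfun_apply (f' z)) (at z within {a..T} \<times> UNIV)"
    and "continuous_on ({a..T} \<times> UNIV) f'"
    using assms(1) unfolding C1_on_def by blast
  have pt_eq: "pt {a..T} f t x = f' (t, x) (1, 0)" if "t \<in> {a..T}" for t x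
    using vector_derivative_unique_within_closed_interval[of a T t, unfolded cbox_interval,
        OF assms(2) that has_vector_derivative_pt[OF assms(1) that]
        has_vector_derivative_field_time[OF f' that]] .
  have "continuous_on ({a..T} \<times> UNIV) (\<lambda>z. f' z (1, 0))"
    using \<open>continuous_on ({a..T} \<times> UNIV) f'\<close> by (auto intro!: continuous_intros)
  then show ?thesis
    by (rule continuous_on_eq) (auto simp: pt_eq)
qed

lemma px_eq_field_derivative:
  fixes f :: "real \<Rightarrow> real ^ 'n \<Rightarrow> 'b::real_normed_vector"
  assumes f': "\<forall>z\<in>{a..T} \<times> UNIV.
      ((\<lambda>(t, x). f t x) has_derivative blinfun_apply (f' z)) (at z within {a..T} \<times> UNIV)"
    and t: "t \<in> {a..T}"
  shows "px i f t x = f' (t, x) (0, axis i 1)"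
  using has_vector_derivative_field_space[OF f' t, of 0 UNIV x "axis i 1"]
  unfolding px_def by (simp add: vector_derivative_at)

lemma has_vector_derivative_px:
  assumes "C1_on ({a..T} \<times> UNIV) (\<lambda>(t, x). f t x)" and t: "t \<in> {a..T}" and "s \<in> U"
  shows "((\<lambda>h. f t (x + h *\<^sub>R axis i 1)) has_vector_derivative px i f t (x + s *\<^sub>R axis i 1))
    (at s within U)"
proof -
  obtain f' where f': "\<forall>z\<in>{a..T} \<times> UNIV.
      ((\<lambda>(t, x). f t x) has_derivative blinfun_apply (f' z)) (at z within {a..T} \<times> UNIV)"
    using assms(1) unfolding C1_on_def by blast
  show ?thesis
    using has_vector_derivative_field_space[OF f' t \<open>s \<in> U\<close>] px_eq_field_derivative[OF f' t]
    by simp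
qed

lemma continuous_on_px:
  assumes "C1_on ({a..T} \<times> UNIV) (\<lambda>(t, x). f t x)"
  shows "continuous_on ({a..T} \<times> UNIV) (\<lambda>(t, x). px i f t x)"
proof -
  obtain f' where f': "\<forall>z\<in>{a..T} \<times> UNIV.
      ((\<lambda>(t, x). f t x) has_derivative blinfun_apply (f' z)) (at z within {a..T} \<times> UNIV)"
    and "continuous_on ({a..T} \<times> UNIV) f'"
    using assms(1) unfolding C1_on_def by blast
  have "continuous_on ({a..T} \<times> UNIV) (\<lambda>z. f' z (0, axis i 1))"
    using \<open>continuous_on ({a..T} \<times> UNIV) f'\<close> by (auto intro!: continuous_intros)
  then show ?thesis
    by (rule continuous_on_eq) (auto simp: px_eq_field_derivative[OF f'])
qed

section \<open>Integrals of compactly supported functions\<close>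

lemma has_integral_UNIV_cbox_support:
  fixes f :: "'a::euclidean_space \<Rightarrow> 'b::banach"
  assumes "continuous_on (cbox c d) f" and "\<And>x. x \<notin> cbox c d \<Longrightarrow> f x = 0"
  shows "(f has_integral integral (cbox c d) f) UNIV"
  using has_integral_on_superset[OF integrable_integral[OF integrable_continuous[OF assms(1)]] assms(2)]
  by simp

lemma integrable_compact_support:
  fixes f :: "'a::euclidean_space \<Rightarrow> 'b::banach"
  assumes "continuous_on UNIV f" and "compact K" and "\<And>x. x \<notin> K \<Longrightarrow> f x = 0"
  shows "f integrable_on UNIV"
proof -
  obtain c where "K \<subseteq> cbox (- c) c"
    using bounded_subset_cbox_symmetric compact_imp_bounded assms(2) by metis
  then show ?thesis
    using has_integral_UNIV_cbox_support[OF continuous_on_subset[OF assms(1)], of "- c" c] assms(3)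
    by blast
qed

lemma integral_translate_compact_support:
  fixes f :: "'a::euclidean_space \<Rightarrow> 'b::banach"
  assumes "continuous_on UNIV f" and "compact K" and "\<And>x. x \<notin> K \<Longrightarrow> f x = 0"
  shows "integral UNIV (\<lambda>x. f (x + c)) = integral UNIV f"
proof -
  obtain d where "K \<subseteq> cbox (- d) d"
    using bounded_subset_cbox_symmetric compact_imp_bounded assms(2) by metis
  then have f: "(f has_integral integral (cbox (- d) d) f) UNIV"
    using has_integral_UNIV_cbox_support[OF continuous_on_subset[OF assms(1)]] assms(3) by blast
  have "(f has_integral integral (cbox (- d) d) f) (cbox (- d) d)"
    using integrable_continuous[OF continuous_on_subset[OF assms(1)]] by (simp add: integrable_integral)
  then have "((\<lambda>x. f (x + c)) has_integral integral (cbox (- d) d) f) (cbox (- d - c) (d - c))"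
    using has_integral_shift_cbox_iff[of f c _ "- d - c" "d - c"] by (simp add: o_def add.commute)
  moreover have "f (x + c) = 0" if "x \<notin> cbox (- d - c) (d - c)" for x
  proof -
    have "x + c \<notin> cbox (- d) d"
      using that by (fastforce simp: mem_box inner_diff_left inner_add_left)
    then show ?thesis using \<open>K \<subseteq> cbox (- d) d\<close> assms(3) by blast
  qed
  ultimately have "((\<lambda>x. f (x + c)) has_integral integral (cbox (- d) d) f) UNIV"
    by (rule has_integral_on_superset) auto
  with f show ?thesis by (simp add: integral_unique)
qed

lemma integral_nonneg_unconditional:
  fixes f :: "'a::euclidean_space \<Rightarrow> real"
  assumes "\<And>x. x \<in> S \<Longrightarrow> 0 \<le> f x"
  shows "0 \<le> integral S f"
  using assms by (cases "f integrable_on S") (simp_all add: integral_nonneg not_integrable_integral)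

lemma integral_nonpos_unconditional:
  fixes f :: "'a::euclidean_space \<Rightarrow> real"
  assumes "\<And>x. x \<in> S \<Longrightarrow> f x \<le> 0"
  shows "integral S f \<le> 0"
  using integral_nonneg_unconditional[of S "\<lambda>x. - f x"] assms by simp

lemma has_integral_vec_lambda_0:
  fixes h :: "'n::finite \<Rightarrow> 'a::euclidean_space \<Rightarrow> real"
  assumes "\<And>j. (h j has_integral 0) A"
  shows "((\<lambda>x. \<chi> j. h j x) has_integral 0) A"
  by (subst has_integral_componentwise_iff) (auto simp: Basis_vec_def inner_axis assms)

lemma has_vector_derivative_integral_compact_support:
  fixes f f' :: "real \<Rightarrow> 'a::euclidean_space \<Rightarrow> 'b::banach"
  assumes "a < b" and t: "t \<in> {a..b}"
    and f': "\<And>s x. s \<in> {a..b} \<Longrightarrow> ((\<lambda>s. f s x) has_vector_derivative f' s x) (at s within {a..b})"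
    and cont_f: "\<And>s. s \<in> {a..b} \<Longrightarrow> continuous_on UNIV (f s)"
    and cont_f': "continuous_on ({a..b} \<times> UNIV) (\<lambda>(s, x). f' s x)"
    and "compact K" and supp: "\<And>s x. s \<in> {a..b} \<Longrightarrow> x \<notin> K \<Longrightarrow> f s x = 0"
  shows "((\<lambda>s. integral UNIV (f s)) has_vector_derivative integral UNIV (f' t)) (at t within {a..b})"
    and "f' t integrable_on UNIV"
proof -
  obtain c where "K \<subseteq> cbox (- c) c"
    using bounded_subset_cbox_symmetric compact_imp_bounded \<open>compact K\<close> by metis
  let ?B = "cbox (- c) c"
  have outside: "x \<notin> ?B \<Longrightarrow> x \<notin> K" for x
    using \<open>K \<subseteq> ?B\<close> by blast
  have integral_B: "integral UNIV (f s) = integral ?B (f s)" if "s \<in> {a..b}" for s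
    using has_integral_UNIV_cbox_support[OF continuous_on_subset[OF cont_f[OF that]]] supp[OF that]
      outside by (simp add: integral_unique)
  have deriv: "((\<lambda>s. integral ?B (f s)) has_vector_derivative integral ?B (f' t)) (at t within {a..b})"
  proof (rule leibniz_rule_vector_derivative[OF f' _ continuous_on_subset[OF cont_f'] t])
    show "f s integrable_on ?B" if "s \<in> {a..b}" for s
      using continuous_on_subset[OF cont_f[OF that]] by (simp add: integrable_continuous)
  qed auto
  have deriv_B: "((\<lambda>s. integral UNIV (f s)) has_vector_derivative integral ?B (f' t))
      (at t within {a..b})"
    by (rule has_vector_derivative_transform[OF t _ deriv]) (simp add: integral_B)
  have "f' t x = 0" if "x \<notin> K" for x
  proof -
    have "((\<lambda>s. f s x) has_vector_derivative 0) (at t within {a..b})"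
      by (rule has_vector_derivative_transform[OF t, of _ "\<lambda>s. 0"]) (auto simp: supp[OF _ that])
    with f'[OF t] show ?thesis
      using vector_derivative_unique_within_closed_interval[of a b t, unfolded cbox_interval,
          OF \<open>a < b\<close> t]
      by blast
  qed
  then have "(f' t has_integral integral ?B (f' t)) UNIV"
    using has_integral_UNIV_cbox_support[OF continuous_on_subset[OF continuous_on_slice[OF cont_f' t]]]
      outside by simp
  then show "f' t integrable_on UNIV"
    and "((\<lambda>s. integral UNIV (f s)) has_vector_derivative integral UNIV (f' t)) (at t within {a..b})"
    using deriv_B by (auto simp: integral_unique)
qed

lemma integral_antisymmetric_kernel_eq_0:
  fixes P :: "'a::euclidean_space \<Rightarrow> 'a \<Rightarrow> real" and r :: "'a \<Rightarrow> real" and w :: "'a \<Rightarrow> 'b::euclidean_space"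
  assumes "continuous_on UNIV (\<lambda>(x, y). P x y)" and "continuous_on UNIV r" and "continuous_on UNIV w"
    and sym: "\<And>x y. P x y = P y x" and "compact K" and supp: "\<And>x. x \<notin> K \<Longrightarrow> r x = 0"
  shows "integral UNIV (\<lambda>x. integral UNIV (\<lambda>y. (P x y * r x * r y) *\<^sub>R (w y - w x))) = 0"
proof -
  define k where "k x y = (P x y * r x * r y) *\<^sub>R (w y - w x)" for x y
  obtain c where "K \<subseteq> cbox (- c) c"
    using bounded_subset_cbox_symmetric compact_imp_bounded \<open>compact K\<close> by metis
  let ?B = "cbox (- c) c"
  have k_outside: "k x y = 0" if "x \<notin> ?B \<or> y \<notin> ?B" for x y
    using that \<open>K \<subseteq> ?B\<close> supp unfolding k_def by auto
  have inner: "integral UNIV (k x) = (if x \<in> ?B then integral ?B (k x) else 0)" for x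
  proof (cases "x \<in> ?B")
    case True
    have "k x = (\<lambda>y. if y \<in> ?B then k x y else 0)"
      using k_outside by auto
    then show ?thesis
      using True by (metis integral_restrict_UNIV)
  next
    case False
    then have "k x = (\<lambda>y. 0)"
      using k_outside by auto
    then show ?thesis
      using False by simp
  qed
  have "continuous_on UNIV (\<lambda>z. k (fst z) (snd z))"
    using assms(1) unfolding k_def
    by (auto simp: case_prod_unfold intro!: continuous_intros continuous_on_compose2[OF assms(2)]
        continuous_on_compose2[OF assms(3)])
  then have "continuous_on (cbox (- c, - c) (c, c)) (\<lambda>(x, y). k x y)"
    by (auto simp: case_prod_unfold intro: continuous_on_subset)
  then have swap: "integral ?B (\<lambda>x. integral ?B (k x)) = integral ?B (\<lambda>y. integral ?B (\<lambda>x. k x y))"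
    by (rule integral_swap_continuous)
  have "(\<lambda>x. k x y) = (\<lambda>x. - k y x)" for y
    unfolding k_def using sym by (auto simp: fun_eq_iff algebra_simps)
  with swap have "integral ?B (\<lambda>x. integral ?B (k x)) = - integral ?B (\<lambda>x. integral ?B (k x))"
    by (simp add: integral_neg)
  then have "integral ?B (\<lambda>x. integral ?B (k x)) = 0"
    by (simp add: eq_neg_iff_add_eq_0 flip: scaleR_2)
  then show ?thesis
    unfolding k_def[symmetric] inner by (simp add: integral_restrict_UNIV)
qed

section \<open>Balance laws\<close>

lemma has_integral_px_0:
  fixes f :: "real \<Rightarrow> real ^ 'n \<Rightarrow> 'b::banach"
  assumes f: "C1_on ({a..T} \<times> UNIV) (\<lambda>(t, x). f t x)" and t: "t \<in> {a..T}"
    and "compact K" and supp: "\<And>x. x \<notin> K \<Longrightarrow> f t x = 0"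
  shows "(px i f t has_integral 0) UNIV"
proof -
  \<comment> \<open>\<open>\<integral> f t (x + s e\<^sub>i) dx\<close> does not depend on \<open>s\<close>; its derivative at \<open>s = 0\<close> is \<open>\<integral> px i f t\<close>.\<close>
  define e :: "real ^ 'n" where "e = axis i 1"
  define K' where "K' = {x + y |x y. x \<in> K \<and> y \<in> (\<lambda>s. - s *\<^sub>R e) ` {-1..1}}"
  have "compact K'"
    unfolding K'_def
    by (intro compact_sums \<open>compact K\<close> compact_continuous_image) (auto intro!: continuous_intros)
  have supp': "f t (x + s *\<^sub>R e) = 0" if "s \<in> {-1..1}" "x \<notin> K'" for s x
  proof -
    have "x + s *\<^sub>R e \<notin> K"
      using that unfolding K'_def by (metis (mono_tags, lifting) add_diff_cancel diff_conv_add_uminus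
          image_eqI mem_Collect_eq scaleR_minus_left)
    then show ?thesis by (rule supp)
  qed
  have cont_f: "continuous_on UNIV (f t)"
    using continuous_on_slice[OF C1_on_imp_continuous_on[OF f] t] .
  have "continuous_on ({-1..1} \<times> UNIV) (\<lambda>z. snd z + fst z *\<^sub>R e)"
    by (intro continuous_intros)
  then have "continuous_on ({-1..1} \<times> UNIV) (\<lambda>(s, x). px i f t (x + s *\<^sub>R e))"
    using continuous_on_compose_Pair[OF continuous_on_px[OF f, of i] continuous_on_const] t
    by (simp add: case_prod_unfold)
  moreover have "((\<lambda>h. f t (x + h *\<^sub>R e)) has_vector_derivative px i f t (x + s *\<^sub>R e))
      (at s within {-1..1})" if "s \<in> {-1..1}" for s x
    unfolding e_def using has_vector_derivative_px[OF f t that] .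
  moreover have "continuous_on UNIV (\<lambda>x. f t (x + s *\<^sub>R e))" for s
    by (rule continuous_on_compose2[OF cont_f]) (auto intro!: continuous_intros)
  ultimately have "((\<lambda>s. integral UNIV (\<lambda>x. f t (x + s *\<^sub>R e))) has_vector_derivative
        integral UNIV (\<lambda>x. px i f t (x + 0 *\<^sub>R e))) (at 0 within {-1..1})"
    and integrable: "(\<lambda>x. px i f t (x + 0 *\<^sub>R e)) integrable_on UNIV"
    using has_vector_derivative_integral_compact_support[where a = "-1" and b = 1 and t = 0
        and f = "\<lambda>s x. f t (x + s *\<^sub>R e)" and f' = "\<lambda>s x. px i f t (x + s *\<^sub>R e)" and K = K',
        OF _ _ _ _ _ \<open>compact K'\<close> supp']
    by auto
  moreover have "((\<lambda>s. integral UNIV (\<lambda>x. f t (x + s *\<^sub>R e))) has_vector_derivative 0)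
      (at 0 within {-1..1})"
    using integral_translate_compact_support[OF cont_f \<open>compact K\<close> supp]
    by (simp add: has_vector_derivative_const)
  ultimately have "integral UNIV (px i f t) = 0"
    using vector_derivative_unique_within_closed_interval[of "-1" 1 0, unfolded cbox_interval] by simp
  with integrable show ?thesis
    by (simp add: has_integral_integral)
qed

lemma has_integral_divergence_0:
  fixes G :: "'n \<Rightarrow> real \<Rightarrow> real ^ 'n \<Rightarrow> 'b::banach"
  assumes "\<And>i. C1_on ({a..T} \<times> UNIV) (\<lambda>(t, x). G i t x)" and "t \<in> {a..T}"
    and "compact K" and "\<And>i x. x \<notin> K \<Longrightarrow> G i t x = 0"
  shows "((\<lambda>x. \<Sum>i\<in>UNIV. px i (G i) t x) has_integral 0) UNIV"
  using has_integral_sum[of UNIV "\<lambda>i x. px i (G i) t x" "\<lambda>i. 0" UNIV]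
    has_integral_px_0[OF assms] by simp

lemma has_vector_derivative_integral_balance:
  fixes f :: "real \<Rightarrow> real ^ 'n \<Rightarrow> 'b::banach"
  assumes f: "C1_on ({a..T} \<times> UNIV) (\<lambda>(t, x). f t x)" and "a < T" and t: "t \<in> {a..T}"
    and "compact K" and supp: "\<And>s x. s \<in> {a..T} \<Longrightarrow> x \<notin> K \<Longrightarrow> f s x = 0"
    and d: "(d has_integral 0) UNIV" and balance: "\<And>x. pt {a..T} f t x + d x = r x"
  shows "((\<lambda>s. integral UNIV (f s)) has_vector_derivative integral UNIV r) (at t within {a..T})"
    and "r integrable_on UNIV"
proof -
  have deriv: "((\<lambda>s. integral UNIV (f s)) has_vector_derivative integral UNIV (pt {a..T} f t))
      (at t within {a..T})"
    and "pt {a..T} f t integrable_on UNIV"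
    using has_vector_derivative_integral_compact_support[OF \<open>a < T\<close> t has_vector_derivative_pt[OF f]
        continuous_on_slice[OF C1_on_imp_continuous_on[OF f]] continuous_on_pt[OF f \<open>a < T\<close>]
        \<open>compact K\<close> supp]
    by auto
  then have "((\<lambda>x. pt {a..T} f t x + d x) has_integral integral UNIV (pt {a..T} f t) + 0) UNIV"
    by (intro has_integral_add integrable_integral d)
  then have "(r has_integral integral UNIV (pt {a..T} f t)) UNIV"
    using balance by simp
  with deriv show "r integrable_on UNIV"
    and "((\<lambda>s. integral UNIV (f s)) has_vector_derivative integral UNIV r) (at t within {a..T})"
    by (auto simp: integral_unique)
qed

section \<open>A differential inequality\<close>

lemma integral_le_of_exponential_decay:
  fixes H :: "real \<Rightarrow> real"
  assumes "a < T" and "c > 0" and "H T \<ge> 0"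
    and decay: "\<And>t. t \<in> {a..T} \<Longrightarrow> \<exists>H'. (H has_real_derivative H') (at t within {a..T}) \<and> H' \<le> - c * H t"
  shows "c * integral {a..T} H \<le> H a"
proof -
  obtain H' where H': "\<And>t. t \<in> {a..T} \<Longrightarrow> (H has_real_derivative H' t) (at t within {a..T})"
    and H'_le: "\<And>t. t \<in> {a..T} \<Longrightarrow> H' t \<le> - c * H t"
    using decay by metis
  have "continuous_on {a..T} H"
    using H' by (meson DERIV_continuous continuous_on_eq_continuous_within)
  define \<Phi> where "\<Phi> t = H t + c * integral {a..t} H" for t
  have \<Phi>': "(\<Phi> has_derivative (*) (H' t + c * H t)) (at t within {a..T})" if "t \<in> {a..T}" for t
  proof -
    have "(\<Phi> has_real_derivative (H' t + c * H t)) (at t within {a..T})"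
      unfolding \<Phi>_def using H'[OF that] integral_has_real_derivative[OF \<open>continuous_on {a..T} H\<close> that]
      by (auto intro!: derivative_eq_intros)
    then show ?thesis
      by (simp add: has_field_derivative_def)
  qed
  obtain s where s: "s \<in> {a<..<T}" and "\<Phi> T - \<Phi> a = (H' s + c * H s) * (T - a)"
    using mvt_simple[OF \<open>a < T\<close> \<Phi>'] by auto
  moreover have "H' s + c * H s \<le> 0"
    using H'_le[of s] s by auto
  ultimately have "\<Phi> T \<le> \<Phi> a"
    using \<open>a < T\<close> by (smt (verit) mult_nonpos_nonneg)
  then show ?thesis
    using \<open>H T \<ge> 0\<close> unfolding \<Phi>_def by simp
qed

section \<open>The controlled Euler system\<close>

lemma Q2_nonpos:
  assumes "\<And>y. 0 \<le> \<Psi> x y" and "\<And>y. 0 \<le> \<rho> t y" and "\<And>y. 0 < ien u E t y"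
  shows "Q2 \<Psi> \<rho> u E t x \<le> 0"
proof -
  have "inner (u t x) (u t y) - E t x - E t y \<le> 0" for y
  proof -
    have "inner (u t x) (u t y) - E t x - E t y
        = - (norm (u t x - u t y))\<^sup>2 / 2 - ien u E t x - ien u E t y"
      by (simp add: ien_def power2_norm_eq_inner inner_diff_left inner_diff_right inner_commute
          field_simps)
    moreover have "0 \<le> (norm (u t x - u t y))\<^sup>2"
      by simp
    ultimately show ?thesis
      using assms(3)[of x] assms(3)[of y] by linarith
  qed
  then have "\<Psi> x y * \<rho> t x * \<rho> t y * (inner (u t x) (u t y) - E t x - E t y) \<le> 0" for y
    using assms(1,2) by (simp add: mult_nonneg_nonpos)
  then show ?thesis
    unfolding Q2_def by (rule integral_nonpos_unconditional)
qed

definition relative_energy ::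
    "(real \<Rightarrow> real ^ 'n \<Rightarrow> real) \<Rightarrow> (real \<Rightarrow> real ^ 'n \<Rightarrow> real ^ 'n) \<Rightarrow> (real \<Rightarrow> real ^ 'n \<Rightarrow> real) \<Rightarrow>
      real ^ 'n \<Rightarrow> real \<Rightarrow> real" where
  "relative_energy \<rho> u E v t =
     integral UNIV (\<lambda>x. \<rho> t x * (norm (u t x - v))\<^sup>2 + 2 * \<rho> t x * ien u E t x)"

lemma relative_energy_nonneg:
  assumes "\<And>x. 0 \<le> \<rho> t x" and "\<And>x. 0 < ien u E t x"
  shows "0 \<le> relative_energy \<rho> u E v t"
  unfolding relative_energy_def using assms
  by (intro integral_nonneg_unconditional add_nonneg_nonneg mult_nonneg_nonneg) (auto simp: less_imp_le)

lemma feedback_work: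
  assumes "F1 t x = - (1 / sqrt lam) *\<^sub>R (u t x - v)"
    and "F2 t x = - (1 / sqrt lam) * (2 * ien u E t x + inner (u t x) (u t x - v))"
  shows "\<rho> t x * (F2 t x - inner (F1 t x) v)
    = - (1 / sqrt lam) * (\<rho> t x * (norm (u t x - v))\<^sup>2 + 2 * \<rho> t x * ien u E t x)"
  unfolding assms by (simp add: power2_norm_eq_inner inner_diff_left inner_diff_right inner_commute
      algebra_simps)

lemma feedback_control_cost:
  assumes "lam > 0" and e: "0 < ien u E t x"
    and F1: "F1 t x = - (1 / sqrt lam) *\<^sub>R (u t x - v)"
    and F2: "F2 t x = - (1 / sqrt lam) * (2 * ien u E t x + inner (u t x) (u t x - v))"
  shows "lam * Gc \<rho> u E F1 F2 t x = \<rho> t x * (norm (u t x - v))\<^sup>2 + 2 * \<rho> t x * ien u E t x"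
proof -
  have "F2 t x - inner (u t x) (F1 t x) = - (2 * ien u E t x) / sqrt lam"
    unfolding F1 F2 by (simp add: algebra_simps)
  then have d: "\<bar>F2 t x - inner (u t x) (F1 t x)\<bar>\<^sup>2 = 4 * (ien u E t x)\<^sup>2 / lam"
    using \<open>lam > 0\<close> by (simp add: power_divide power_mult_distrib)
  have n: "(norm (F1 t x))\<^sup>2 = (norm (u t x - v))\<^sup>2 / lam"
    unfolding F1 using \<open>lam > 0\<close> by (simp add: power_mult_distrib power_divide)
  have "lam * Gc \<rho> u E F1 F2 t x = lam * (\<rho> t x * ((norm (u t x - v))\<^sup>2 / lam)
      + \<rho> t x / (2 * ien u E t x) * (4 * (ien u E t x)\<^sup>2 / lam))"
    unfolding Gc_def d n ..
  also have "\<dots> = \<rho> t x * (norm (u t x - v))\<^sup>2 + 2 * \<rho> t x * ien u E t x"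
    using \<open>lam > 0\<close> e by (simp add: field_simps power2_eq_square)
  finally show ?thesis .
qed

lemma cost_feedback:
  assumes "lam > 0" and e: "\<And>t x. t \<in> {a..T} \<Longrightarrow> 0 < ien u E t x"
    and F1: "\<And>t x. t \<in> {a..T} \<Longrightarrow> F1 t x = - (1 / sqrt lam) *\<^sub>R (u t x - v)"
    and F2: "\<And>t x. t \<in> {a..T} \<Longrightarrow>
      F2 t x = - (1 / sqrt lam) * (2 * ien u E t x + inner (u t x) (u t x - v))"
  shows "cost lam v a T \<rho> u E F1 F2 = 2 * integral {a..T} (relative_energy \<rho> u E v)"
proof -
  have "lam * Gc \<rho> u E F1 F2 t x = \<rho> t x * (norm (u t x - v))\<^sup>2 + 2 * \<rho> t x * ien u E t x"
    if "t \<in> {a..T}" for t x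
    using e[OF that] F1[OF that] F2[OF that] by (rule feedback_control_cost[OF \<open>lam > 0\<close>])
  then have integrand:
    "\<rho> t x * (norm (u t x - v))\<^sup>2 + 2 * \<rho> t x * ien u E t x + lam * Gc \<rho> u E F1 F2 t x
      = 2 * (\<rho> t x * (norm (u t x - v))\<^sup>2 + 2 * \<rho> t x * ien u E t x)" if "t \<in> {a..T}" for t x
    using that by simp
  have "cost lam v a T \<rho> u E F1 F2 = integral {a..T} (\<lambda>t. 2 * relative_energy \<rho> u E v t)"
    unfolding cost_def relative_energy_def
    by (rule integral_cong) (simp only: integrand integral_mult_right)
  then show ?thesis
    by simp
qed

locale controlled_euler =
  fixes \<Psi> :: "real ^ 'n \<Rightarrow> real ^ 'n \<Rightarrow> real" and a T :: real
    and \<rho> E F2 :: "real \<Rightarrow> real ^ 'n \<Rightarrow> real" and u F1 :: "real \<Rightarrow> real ^ 'n \<Rightarrow> real ^ 'n"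
  assumes admissible: "admissible \<Psi> a T \<rho> u E F1 F2" and a_less_T: "a < T"
    and Psi_continuous: "continuous_on UNIV (\<lambda>(x, y). \<Psi> x y)"
    and Psi_sym: "\<And>x y. \<Psi> x y = \<Psi> y x" and Psi_nonneg: "\<And>x y. 0 \<le> \<Psi> x y"
begin

lemma
  C1_rho: "C1_on ({a..T} \<times> UNIV) (\<lambda>(t, x). \<rho> t x)" and
  C1_u: "C1_on ({a..T} \<times> UNIV) (\<lambda>(t, x). u t x)" and
  C1_E: "C1_on ({a..T} \<times> UNIV) (\<lambda>(t, x). E t x)" and
  F1_continuous: "continuous_on ({a..T} \<times> UNIV) (\<lambda>(t, x). F1 t x)" and
  F2_continuous: "continuous_on ({a..T} \<times> UNIV) (\<lambda>(t, x). F2 t x)" and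
  rho_nonneg: "\<forall>t\<in>{a..T}. \<forall>x. 0 \<le> \<rho> t x" and
  ien_pos: "\<forall>t\<in>{a..T}. \<forall>x. 0 < ien u E t x" and
  bounded_support: "\<exists>K. compact K \<and> (\<forall>t\<in>{a..T}. closure {x. \<rho> t x \<noteq> 0} \<subseteq> K)" and
  mass_equation: "\<forall>t\<in>{a..T}. \<forall>x.
    pt {a..T} \<rho> t x + (\<Sum>i\<in>UNIV. px i (\<lambda>t x. \<rho> t x * u t x $ i) t x) = 0" and
  momentum_equation: "\<forall>t\<in>{a..T}. \<forall>x.
    pt {a..T} (\<lambda>t x. \<rho> t x *\<^sub>R u t x) t x
     + (\<chi> j. \<Sum>i\<in>UNIV. px i (\<lambda>t x. \<rho> t x * u t x $ j * u t x $ i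
          + (if i = j then press \<rho> u E t x else 0)) t x)
     = Q1 \<Psi> \<rho> u t x + \<rho> t x *\<^sub>R F1 t x" and
  energy_equation: "\<forall>t\<in>{a..T}. \<forall>x.
    pt {a..T} (\<lambda>t x. \<rho> t x * E t x) t x
     + (\<Sum>i\<in>UNIV. px i (\<lambda>t x. \<rho> t x * E t x * u t x $ i + press \<rho> u E t x * u t x $ i) t x)
     = Q2 \<Psi> \<rho> u E t x + \<rho> t x * F2 t x"
  by (insert admissible[unfolded admissible_def Let_def]) (elim conjE; assumption)+

definition support :: "(real ^ 'n) set" where
  "support = closure (\<Union>t\<in>{a..T}. {x. \<rho> t x \<noteq> 0})"

lemma compact_support: "compact support"
proof -
  obtain K where "compact K" and K: "\<forall>t\<in>{a..T}. closure {x. \<rho> t x \<noteq> 0} \<subseteq> K"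
    using bounded_support by blast
  have "{x. \<rho> t x \<noteq> 0} \<subseteq> K" if "t \<in> {a..T}" for t
    using subset_trans[OF closure_subset K[rule_format, OF that]] .
  then have "(\<Union>t\<in>{a..T}. {x. \<rho> t x \<noteq> 0}) \<subseteq> K"
    by blast
  then have "support \<subseteq> K"
    unfolding support_def using \<open>compact K\<close> by (simp add: closure_minimal compact_imp_closed)
  then have "K \<inter> support = support"
    by blast
  moreover have "closed support"
    unfolding support_def by simp
  ultimately show ?thesis
    using compact_Int_closed[OF \<open>compact K\<close>, of support] by simp
qed

lemma rho_outside_support: "t \<in> {a..T} \<Longrightarrow> x \<notin> support \<Longrightarrow> \<rho> t x = 0"
  unfolding support_def using closure_subset[of "\<Union>t\<in>{a..T}. {x. \<rho> t x \<noteq> 0}"] by blast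

lemma C1_press: "C1_on ({a..T} \<times> UNIV) (\<lambda>(t, x). press \<rho> u E t x)"
proof -
  have "press \<rho> u E t x = (2 / real CARD('n)) * \<rho> t x * (E t x - 1 / 2 * inner (u t x) (u t x))" for t x
    by (simp add: press_def ien_def power2_norm_eq_inner)
  then show ?thesis
    using C1_rho C1_u C1_E unfolding case_prod_unfold
    by (simp only:) (intro C1_on_mult C1_on_diff C1_on_inner C1_on_const)
qed

lemma C1_mass_flux: "C1_on ({a..T} \<times> UNIV) (\<lambda>(t, x). \<rho> t x * u t x $ i)"
  using C1_rho C1_u unfolding case_prod_unfold by (intro C1_on_mult C1_on_component)

lemma C1_momentum: "C1_on ({a..T} \<times> UNIV) (\<lambda>(t, x). \<rho> t x *\<^sub>R u t x)"
  using C1_rho C1_u unfolding case_prod_unfold by (intro C1_on_scaleR)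

lemma C1_momentum_flux:
  "C1_on ({a..T} \<times> UNIV)
     (\<lambda>(t, x). \<rho> t x * u t x $ j * u t x $ i + (if i = j then press \<rho> u E t x else 0))"
proof -
  have "C1_on ({a..T} \<times> UNIV) (\<lambda>z. if i = j then press \<rho> u E (fst z) (snd z) else 0)"
    using C1_press by (cases "i = j") (simp_all add: case_prod_unfold C1_on_const)
  then show ?thesis
    using C1_rho C1_u unfolding case_prod_unfold by (intro C1_on_add C1_on_mult C1_on_component)
qed

lemma C1_energy: "C1_on ({a..T} \<times> UNIV) (\<lambda>(t, x). \<rho> t x * E t x)"
  using C1_rho C1_E unfolding case_prod_unfold by (intro C1_on_mult)

lemma C1_energy_flux:
  "C1_on ({a..T} \<times> UNIV) (\<lambda>(t, x). \<rho> t x * E t x * u t x $ i + press \<rho> u E t x * u t x $ i)"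
  using C1_rho C1_u C1_E C1_press unfolding case_prod_unfold
  by (intro C1_on_add C1_on_mult C1_on_component)

lemma continuous_on_rho: "t \<in> {a..T} \<Longrightarrow> continuous_on UNIV (\<rho> t)"
  and continuous_on_u: "t \<in> {a..T} \<Longrightarrow> continuous_on UNIV (u t)"
  and continuous_on_E: "t \<in> {a..T} \<Longrightarrow> continuous_on UNIV (E t)"
  and continuous_on_F1: "t \<in> {a..T} \<Longrightarrow> continuous_on UNIV (F1 t)"
  and continuous_on_F2: "t \<in> {a..T} \<Longrightarrow> continuous_on UNIV (F2 t)"
  using continuous_on_slice[OF C1_on_imp_continuous_on[OF C1_rho]]
    continuous_on_slice[OF C1_on_imp_continuous_on[OF C1_u]]
    continuous_on_slice[OF C1_on_imp_continuous_on[OF C1_E]]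
    continuous_on_slice[OF F1_continuous] continuous_on_slice[OF F2_continuous]
  by auto

lemma integrable_rho_times:
  fixes g :: "real ^ 'n \<Rightarrow> 'b::banach"
  assumes "t \<in> {a..T}" and "continuous_on UNIV g"
  shows "(\<lambda>x. \<rho> t x *\<^sub>R g x) integrable_on UNIV"
  using assms by (intro integrable_compact_support[OF _ compact_support])
    (auto simp: rho_outside_support intro!: continuous_intros continuous_on_rho)

lemma mass_conservation:
  assumes t: "t \<in> {a..T}"
  shows "((\<lambda>s. integral UNIV (\<rho> s)) has_vector_derivative 0) (at t within {a..T})"
proof -
  have "((\<lambda>x. \<Sum>i\<in>UNIV. px i (\<lambda>t x. \<rho> t x * u t x $ i) t x) has_integral 0) UNIV"
    by (rule has_integral_divergence_0[OF C1_mass_flux t compact_support])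
      (simp add: rho_outside_support[OF t])
  from has_vector_derivative_integral_balance(1)[OF C1_rho a_less_T t compact_support
      rho_outside_support this mass_equation[rule_format, OF t]]
  show ?thesis by simp
qed

lemma integral_Q1_eq_0: "t \<in> {a..T} \<Longrightarrow> integral UNIV (Q1 \<Psi> \<rho> u t) = 0"
  unfolding Q1_def
  by (rule integral_antisymmetric_kernel_eq_0[OF Psi_continuous continuous_on_rho continuous_on_u Psi_sym
        compact_support rho_outside_support])

lemma momentum_balance:
  assumes t: "t \<in> {a..T}"
  shows "((\<lambda>s. integral UNIV (\<lambda>x. \<rho> s x *\<^sub>R u s x)) has_vector_derivative
      integral UNIV (\<lambda>x. \<rho> t x *\<^sub>R F1 t x)) (at t within {a..T})"
proof -
  have "((\<lambda>x. \<chi> j. \<Sum>i\<in>UNIV. px i (\<lambda>t x. \<rho> t x * u t x $ j * u t x $ i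
          + (if i = j then press \<rho> u E t x else 0)) t x) has_integral 0) UNIV"
    by (intro has_integral_vec_lambda_0 has_integral_divergence_0[OF C1_momentum_flux t compact_support])
      (simp add: rho_outside_support[OF t] press_def)
  moreover have "\<rho> s x *\<^sub>R u s x = 0" if "s \<in> {a..T}" and "x \<notin> support" for s x
    using rho_outside_support[OF that] by simp
  ultimately have balance:
    "((\<lambda>s. integral UNIV (\<lambda>x. \<rho> s x *\<^sub>R u s x)) has_vector_derivative
       integral UNIV (\<lambda>x. Q1 \<Psi> \<rho> u t x + \<rho> t x *\<^sub>R F1 t x)) (at t within {a..T})"
    "(\<lambda>x. Q1 \<Psi> \<rho> u t x + \<rho> t x *\<^sub>R F1 t x) integrable_on UNIV"
    using has_vector_derivative_integral_balance[OF C1_momentum a_less_T t compact_support, of _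
        "\<lambda>x. Q1 \<Psi> \<rho> u t x + \<rho> t x *\<^sub>R F1 t x"] momentum_equation t
    by blast+
  have "(\<lambda>x. \<rho> t x *\<^sub>R F1 t x) integrable_on UNIV"
    by (rule integrable_rho_times[OF t continuous_on_F1[OF t]])
  with balance(2) have "Q1 \<Psi> \<rho> u t integrable_on UNIV"
    using integrable_diff by fastforce
  with balance(1) show ?thesis
    using \<open>(\<lambda>x. \<rho> t x *\<^sub>R F1 t x) integrable_on UNIV\<close> integral_Q1_eq_0[OF t]
    by (simp add: rho_outside_support integral_add)
qed

lemma energy_balance:
  assumes t: "t \<in> {a..T}"
  shows "((\<lambda>s. integral UNIV (\<lambda>x. \<rho> s x * E s x)) has_vector_derivative
      integral UNIV (Q2 \<Psi> \<rho> u E t) + integral UNIV (\<lambda>x. \<rho> t x * F2 t x)) (at t within {a..T})"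
proof -
  have "((\<lambda>x. \<Sum>i\<in>UNIV. px i (\<lambda>t x. \<rho> t x * E t x * u t x $ i + press \<rho> u E t x * u t x $ i) t x)
      has_integral 0) UNIV"
    by (rule has_integral_divergence_0[OF C1_energy_flux t compact_support])
      (simp add: rho_outside_support[OF t] press_def)
  moreover have "\<rho> s x * E s x = 0" if "s \<in> {a..T}" and "x \<notin> support" for s x
    using rho_outside_support[OF that] by simp
  ultimately have balance:
    "((\<lambda>s. integral UNIV (\<lambda>x. \<rho> s x * E s x)) has_vector_derivative
       integral UNIV (\<lambda>x. Q2 \<Psi> \<rho> u E t x + \<rho> t x * F2 t x)) (at t within {a..T})"
    "(\<lambda>x. Q2 \<Psi> \<rho> u E t x + \<rho> t x * F2 t x) integrable_on UNIV"
    using has_vector_derivative_integral_balance[OF C1_energy a_less_T t compact_support, of _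
        "\<lambda>x. Q2 \<Psi> \<rho> u E t x + \<rho> t x * F2 t x"] energy_equation t
    by blast+
  have "(\<lambda>x. \<rho> t x * F2 t x) integrable_on UNIV"
    using integrable_rho_times[OF t continuous_on_F2[OF t]] by simp
  with balance(2) have "Q2 \<Psi> \<rho> u E t integrable_on UNIV"
    using integrable_diff by fastforce
  with balance(1) show ?thesis
    using \<open>(\<lambda>x. \<rho> t x * F2 t x) integrable_on UNIV\<close>
    by (simp add: rho_outside_support integral_add)
qed

lemma relative_energy_eq:
  assumes t: "t \<in> {a..T}"
  shows "relative_energy \<rho> u E v t = 2 * integral UNIV (\<lambda>x. \<rho> t x * E t x)
    - 2 * inner (integral UNIV (\<lambda>x. \<rho> t x *\<^sub>R u t x)) v + (norm v)\<^sup>2 * integral UNIV (\<rho> t)"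
proof -
  have "(\<lambda>x. \<rho> t x * E t x) integrable_on UNIV"
    using integrable_rho_times[OF t continuous_on_E[OF t]] by simp
  moreover have "(\<lambda>x. \<rho> t x *\<^sub>R u t x) integrable_on UNIV"
    using integrable_rho_times[OF t continuous_on_u[OF t]] .
  then have "((\<lambda>x. inner (\<rho> t x *\<^sub>R u t x) v) has_integral
      inner (integral UNIV (\<lambda>x. \<rho> t x *\<^sub>R u t x)) v) UNIV"
    using has_integral_linear[OF integrable_integral bounded_linear_inner_left] by (simp only: o_def)
  moreover have "\<rho> t integrable_on UNIV"
    using integrable_rho_times[OF t continuous_on_const[of UNIV "1::real"]] by simp
  ultimately have "((\<lambda>x. 2 * (\<rho> t x * E t x) - 2 * inner (\<rho> t x *\<^sub>R u t x) v + (norm v)\<^sup>2 * \<rho> t x)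
      has_integral (2 * integral UNIV (\<lambda>x. \<rho> t x * E t x)
        - 2 * inner (integral UNIV (\<lambda>x. \<rho> t x *\<^sub>R u t x)) v + (norm v)\<^sup>2 * integral UNIV (\<rho> t))) UNIV"
    by (intro has_integral_add has_integral_diff has_integral_mult_right integrable_integral)
  moreover have "\<rho> t x * (norm (u t x - v))\<^sup>2 + 2 * \<rho> t x * ien u E t x
      = 2 * (\<rho> t x * E t x) - 2 * inner (\<rho> t x *\<^sub>R u t x) v + (norm v)\<^sup>2 * \<rho> t x" for x
    by (simp add: ien_def power2_norm_eq_inner inner_diff_left inner_diff_right inner_commute
        algebra_simps)
  ultimately show ?thesis
    unfolding relative_energy_def by (simp add: integral_unique)
qed

lemma relative_energy_dissipation:
  assumes t: "t \<in> {a..T}"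
  shows "\<exists>H'. (relative_energy \<rho> u E v has_real_derivative H') (at t within {a..T}) \<and>
    H' \<le> 2 * integral UNIV (\<lambda>x. \<rho> t x * (F2 t x - inner (F1 t x) v))"
proof -
  let ?W = "integral UNIV (\<lambda>x. \<rho> t x * F2 t x)"
  let ?P = "integral UNIV (\<lambda>x. \<rho> t x *\<^sub>R F1 t x)"
  let ?H' = "2 * (integral UNIV (Q2 \<Psi> \<rho> u E t) + ?W) - 2 * inner ?P v + (norm v)\<^sup>2 * 0"
  have "((\<lambda>s. 2 * integral UNIV (\<lambda>x. \<rho> s x * E s x)
      - 2 * inner (integral UNIV (\<lambda>x. \<rho> s x *\<^sub>R u s x)) v + (norm v)\<^sup>2 * integral UNIV (\<rho> s))
      has_vector_derivative ?H') (at t within {a..T})"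
    by (intro has_vector_derivative_add has_vector_derivative_diff has_vector_derivative_mult_right
        energy_balance momentum_balance mass_conservation t
        bounded_linear.has_vector_derivative[OF bounded_linear_inner_left])
  then have "(relative_energy \<rho> u E v has_real_derivative ?H') (at t within {a..T})"
    unfolding has_real_derivative_iff_has_vector_derivative
    by (rule has_vector_derivative_transform[OF t relative_energy_eq, rotated])
  moreover have "integral UNIV (Q2 \<Psi> \<rho> u E t) \<le> 0"
    using Q2_nonpos[of \<Psi> _ \<rho> t u E] Psi_nonneg rho_nonneg ien_pos t
    by (simp add: integral_nonpos_unconditional)
  moreover have "?W - inner ?P v = integral UNIV (\<lambda>x. \<rho> t x * (F2 t x - inner (F1 t x) v))"
  proof -
    have "(\<lambda>x. \<rho> t x *\<^sub>R F1 t x) integrable_on UNIV" "(\<lambda>x. \<rho> t x * F2 t x) integrable_on UNIV"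
      using integrable_rho_times[OF t continuous_on_F1[OF t]]
        integrable_rho_times[OF t continuous_on_F2[OF t]] by simp_all
    then have "((\<lambda>x. \<rho> t x * F2 t x - inner (\<rho> t x *\<^sub>R F1 t x) v) has_integral ?W - inner ?P v) UNIV"
      using has_integral_linear[OF integrable_integral bounded_linear_inner_left]
      by (intro has_integral_diff integrable_integral) (simp_all only: o_def)
    then show ?thesis
      by (simp add: integral_unique algebra_simps)
  qed
  ultimately show ?thesis
    by (intro exI[of _ ?H']) auto
qed

lemma relative_energy_decay:
  assumes "lam > 0"
    and F1: "\<And>t x. t \<in> {a..T} \<Longrightarrow> F1 t x = - (1 / sqrt lam) *\<^sub>R (u t x - v)"
    and F2: "\<And>t x. t \<in> {a..T} \<Longrightarrow>
      F2 t x = - (1 / sqrt lam) * (2 * ien u E t x + inner (u t x) (u t x - v))"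
  shows "2 * integral {a..T} (relative_energy \<rho> u E v) \<le> sqrt lam * relative_energy \<rho> u E v a"
proof -
  have "\<rho> t x * (F2 t x - inner (F1 t x) v)
      = - (1 / sqrt lam) * (\<rho> t x * (norm (u t x - v))\<^sup>2 + 2 * \<rho> t x * ien u E t x)"
    if "t \<in> {a..T}" for t x
    using F1[OF that] F2[OF that] by (rule feedback_work)
  then have "2 * integral UNIV (\<lambda>x. \<rho> t x * (F2 t x - inner (F1 t x) v))
      = - (2 / sqrt lam) * relative_energy \<rho> u E v t" if "t \<in> {a..T}" for t
    unfolding relative_energy_def using that by simp
  then have "\<exists>H'. (relative_energy \<rho> u E v has_real_derivative H') (at t within {a..T}) \<and>
      H' \<le> - (2 / sqrt lam) * relative_energy \<rho> u E v t" if "t \<in> {a..T}" for t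
    using relative_energy_dissipation[OF that, of v] that by auto
  moreover have "0 \<le> relative_energy \<rho> u E v T"
    using a_less_T by (intro relative_energy_nonneg) (auto simp: rho_nonneg ien_pos)
  ultimately have "2 / sqrt lam * integral {a..T} (relative_energy \<rho> u E v) \<le> relative_energy \<rho> u E v a"
    using \<open>lam > 0\<close> by (intro integral_le_of_exponential_decay a_less_T) auto
  then show ?thesis
    using \<open>lam > 0\<close> by (simp add: field_simps)
qed

lemma feedback_cost_bound:
  assumes "lam > 0"
    and "\<forall>t\<in>{a..T}. \<forall>x. F1 t x = - (1 / sqrt lam) *\<^sub>R (u t x - v)"
    and "\<forall>t\<in>{a..T}. \<forall>x. F2 t x = - (1 / sqrt lam) * (2 * ien u E t x + inner (u t x) (u t x - v))"
  shows "cost lam v a T \<rho> u E F1 F2 \<le> sqrt lam * relative_energy \<rho> u E v a"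
proof -
  have "cost lam v a T \<rho> u E F1 F2 = 2 * integral {a..T} (relative_energy \<rho> u E v)"
    using assms ien_pos by (intro cost_feedback) auto
  also have "\<dots> \<le> sqrt lam * relative_energy \<rho> u E v a"
    using assms by (intro relative_energy_decay) auto
  finally show ?thesis .
qed

end

theorem lemma3p6:
  fixes \<Psi> :: "real ^ 'n \<Rightarrow> real ^ 'n \<Rightarrow> real"
    and T lam :: real and vbar :: "real ^ 'n"
    and \<rho> E F2 :: "real \<Rightarrow> real ^ 'n \<Rightarrow> real"
    and u F1 :: "real \<Rightarrow> real ^ 'n \<Rightarrow> real ^ 'n"
  assumes T_pos: "T > 0" and lam_pos: "lam > 0"
    and Psi_lip: "\<exists>L. lipschitz_on L UNIV (\<lambda>(x, y). \<Psi> x y)"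
    and Psi_sym: "\<forall>x y. \<Psi> x y = \<Psi> y x"
    and Psi_nonneg: "\<forall>x y. \<Psi> x y \<ge> 0"
    and Psi_bdd: "\<exists>B. \<forall>x y. \<Psi> x y \<le> B"
    and opt: "optimal \<Psi> lam vbar T \<rho> u E F1 F2"
    and feedback: "\<forall>a\<in>{0..<T}. \<exists>\<rho>' u' E' F1' F2'.
        admissible \<Psi> a T \<rho>' u' E' F1' F2' \<and>
        (\<forall>x. \<rho>' a x = \<rho> a x \<and> u' a x = u a x \<and> E' a x = E a x) \<and>
        (\<forall>t\<in>{a..T}. \<forall>x. F1' t x = - (1 / sqrt lam) *\<^sub>R (u' t x - vbar)) \<and>
        (\<forall>t\<in>{a..T}. \<forall>x. F2' t x = - (1 / sqrt lam) *
              (2 * ien u' E' t x + inner (u' t x) (u' t x - vbar)))"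
  shows "\<forall>a\<in>{0..T}. cost lam vbar a T \<rho> u E F1 F2
           \<le> sqrt lam * integral UNIV (\<lambda>x. \<rho> a x * (norm (u a x - vbar))\<^sup>2 + 2 * \<rho> a x * ien u E a x)"
proof
  fix a assume "a \<in> {0..T}"
  show "cost lam vbar a T \<rho> u E F1 F2 \<le> sqrt lam * integral UNIV
      (\<lambda>x. \<rho> a x * (norm (u a x - vbar))\<^sup>2 + 2 * \<rho> a x * ien u E a x)"
  proof (cases "a = T")
    case True
    have "0 \<le> relative_energy \<rho> u E vbar T"
      using opt T_pos by (intro relative_energy_nonneg) (auto simp: optimal_def admissible_def Let_def)
    with True lam_pos show ?thesis
      by (simp add: cost_def relative_energy_def)
  next
    case False
    with \<open>a \<in> {0..T}\<close> have a: "a \<in> {0..<T}"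
      by simp
    then obtain \<rho>' u' E' F1' F2' where adm': "admissible \<Psi> a T \<rho>' u' E' F1' F2'"
      and same: "\<forall>x. \<rho>' a x = \<rho> a x \<and> u' a x = u a x \<and> E' a x = E a x"
      and F1': "\<forall>t\<in>{a..T}. \<forall>x. F1' t x = - (1 / sqrt lam) *\<^sub>R (u' t x - vbar)"
      and F2': "\<forall>t\<in>{a..T}. \<forall>x. F2' t x = - (1 / sqrt lam) *
          (2 * ien u' E' t x + inner (u' t x) (u' t x - vbar))"
      using feedback by blast
    interpret controlled_euler \<Psi> a T \<rho>' E' F2' u' F1'
      using adm' a Psi_sym Psi_nonneg lipschitz_on_continuous_on Psi_lip
      by unfold_locales auto
    have "cost lam vbar a T \<rho> u E F1 F2 \<le> cost lam vbar a T \<rho>' u' E' F1' F2'"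
      using opt a adm' same unfolding optimal_def by blast
    also have "\<dots> \<le> sqrt lam * relative_energy \<rho>' u' E' vbar a"
      using lam_pos F1' F2' by (rule feedback_cost_bound)
    also have "relative_energy \<rho>' u' E' vbar a = relative_energy \<rho> u E vbar a"
      using same by (simp add: relative_energy_def ien_def)
    finally show ?thesis
      unfolding relative_energy_def .
  qed
qed

end
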